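(* Let $C>0$ be a constant such that for all real numbers $\{c_{ij}:1\le i,j\le 4\}$ one has $\min_{S\in\{-1,1\}^8}\sum_{1\le i,j\le 4}c_{ij}S_{u_i}S_{v_j}\le -C\sum_{1\le i,j\le 4}|c_{ij}|$ (such a constant exists, e.g. some $C>\ln(1+\sqrt2)/\pi$). Let $r$ be a positive integer, let $G_r=(V,E)$ be the Chimera graph with $E=E_0\cup E_1\cup E_{01}$, and let $c_{uv}\in\mathbb{R}$ for $(u,v)\in E$ and $d_u\in\mathbb{R}$ for $u\in V$ be arbitrary. Let $H^*=\min_{S\in\{-1,1\}^V}\left(\sum_{(u,v)\in E}c_{uv}S_uS_v+\sum_{u\in V}d_uS_u\right)$, $A_0=\sum_{(u,v)\in E_0}|c_{uv}|$, $A_1=\sum_{(u,v)\in E_1}|c_{uv}|$, and $A_{01}=\sum_{(u,v)\in E_{01}}|c_{uv}|$. Then $H^*\le A_0+A_1-CA_{01}$.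
   Context: The Chimera graph $G_r=(V,E)$: $V=\{(i,j,k,l)\in\mathbb{Z}^4: 1\le i,j\le r,\ 1\le k\le 4,\ l\in\{0,1\}\}$. $E=E_0\cup E_1\cup E_{01}$ (disjoint), where $E_0$ consists of the edges $\{(i,j,k,0),(i+1,j,k,0)\}$ for $1\le i\le r-1$, $1\le j\le r$, $1\le k\le 4$; $E_1$ consists of the edges $\{(i,j,k,1),(i,j+1,k,1)\}$ for $1\le i\le r$, $1\le j\le r-1$, $1\le k\le 4$; and $E_{01}$ consists of the edges $\{(i,j,k_0,0),(i,j,k_1,1)\}$ for $1\le i,j\le r$, $1\le k_0,k_1\le 4$. In the hypothesis on $C$, $u_1,\dots,u_4$ and $v_1,\dots,v_4$ denote the two sides of $K_{4,4}$. *)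

theory Defs
  imports Complex_Main "HOL-Library.FuncSet"
begin

type_synonym vtx = "nat \<times> nat \<times> nat \<times> nat"

text \<open>Chimera graph G_r. A vertex (i,j,k,l) with l in {0,1}. Each edge is
represented once, as the ordered pair listed in the paper's definition.\<close>

definition chimera_V :: "nat \<Rightarrow> vtx set" where
  "chimera_V r = {(i,j,k,l). 1 \<le> i \<and> i \<le> r \<and> 1 \<le> j \<and> j \<le> r \<and> 1 \<le> k \<and> k \<le> 4 \<and> l \<le> 1}"

definition chimera_E0 :: "nat \<Rightarrow> (vtx \<times> vtx) set" where
  "chimera_E0 r = {((i,j,k,0),(i+1,j,k,0)) | i j k.
      1 \<le> i \<and> i \<le> r - 1 \<and> 1 \<le> j \<and> j \<le> r \<and> 1 \<le> k \<and> k \<le> 4}"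

definition chimera_E1 :: "nat \<Rightarrow> (vtx \<times> vtx) set" where
  "chimera_E1 r = {((i,j,k,1),(i,j+1,k,1)) | i j k.
      1 \<le> i \<and> i \<le> r \<and> 1 \<le> j \<and> j \<le> r - 1 \<and> 1 \<le> k \<and> k \<le> 4}"

definition chimera_E01 :: "nat \<Rightarrow> (vtx \<times> vtx) set" where
  "chimera_E01 r = {((i,j,k0,0),(i,j,k1,1)) | i j k0 k1.
      1 \<le> i \<and> i \<le> r \<and> 1 \<le> j \<and> j \<le> r \<and> 1 \<le> k0 \<and> k0 \<le> 4 \<and> 1 \<le> k1 \<and> k1 \<le> 4}"

definition chimera_E :: "nat \<Rightarrow> (vtx \<times> vtx) set" where
  "chimera_E r = chimera_E0 r \<union> chimera_E1 r \<union> chimera_E01 r"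

definition ising_energy ::
  "nat \<Rightarrow> (vtx \<Rightarrow> vtx \<Rightarrow> real) \<Rightarrow> (vtx \<Rightarrow> real) \<Rightarrow> (vtx \<Rightarrow> real) \<Rightarrow> real" where
  "ising_energy r c d S =
     (\<Sum>e\<in>chimera_E r. c (fst e) (snd e) * S (fst e) * S (snd e)) + (\<Sum>u\<in>chimera_V r. d u * S u)"

definition ground_energy ::
  "nat \<Rightarrow> (vtx \<Rightarrow> vtx \<Rightarrow> real) \<Rightarrow> (vtx \<Rightarrow> real) \<Rightarrow> real" where
  "ground_energy r c d = Min (ising_energy r c d ` (chimera_V r \<rightarrow>\<^sub>E {-1, 1}))"

definition K44_min :: "(nat \<Rightarrow> nat \<Rightarrow> real) \<Rightarrow> real" where
  "K44_min c = Min ((\<lambda>(su, sv). \<Sum>i\<in>{1..4}. \<Sum>j\<in>{1..4}. c i j * su i * sv j) `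
                    (({1..4::nat} \<rightarrow>\<^sub>E {-1, 1}) \<times> ({1..4::nat} \<rightarrow>\<^sub>E {-1, 1})))"

end

theory Submission
  imports Defs
begin

text \<open>Choose in every unit cell \<open>(i, j)\<close> an optimal spin configuration of its \<open>K\<^sub>4\<^sub>,\<^sub>4\<close>, so
  that the intra-cell couplings contribute at most \<open>-C\<close> times their absolute sum. Flipping all
  eight spins of a cell leaves its \<open>K\<^sub>4\<^sub>,\<^sub>4\<close> energy unchanged, so each cell can be flipped to make
  its field term non-positive. The couplings between cells are bounded trivially by their
  absolute values.\<close>

definition K44_energy :: "(nat \<Rightarrow> nat \<Rightarrow> real) \<Rightarrow> (nat \<Rightarrow> real) \<Rightarrow> (nat \<Rightarrow> real) \<Rightarrow> real" where
  "K44_energy a su sv = (\<Sum>i\<in>{1..4}. \<Sum>j\<in>{1..4}. a i j * su i * sv j)"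

lemma K44_minimizers:
  obtains su sv :: "(nat \<Rightarrow> nat \<Rightarrow> real) \<Rightarrow> nat \<Rightarrow> real"
  where "\<And>a. su a \<in> {1..4} \<rightarrow>\<^sub>E {-1, 1}" "\<And>a. sv a \<in> {1..4} \<rightarrow>\<^sub>E {-1, 1}"
    and "\<And>a. K44_energy a (su a) (sv a) = K44_min a"
proof -
  let ?P = "({1..4::nat} \<rightarrow>\<^sub>E {-1, 1::real}) \<times> ({1..4::nat} \<rightarrow>\<^sub>E {-1, 1::real})"
  have "finite ?P"
    by (intro finite_cartesian_product finite_PiE) auto
  moreover have "((\<lambda>_\<in>{1..4}. 1), (\<lambda>_\<in>{1..4}. 1)) \<in> ?P"
    by auto
  moreover have "K44_min a = Min ((\<lambda>(su, sv). K44_energy a su sv) ` ?P)" for a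
    unfolding K44_min_def K44_energy_def ..
  ultimately have "K44_min a \<in> (\<lambda>(su, sv). K44_energy a su sv) ` ?P" for a
    by (metis Min_in empty_iff finite_imageI image_is_empty)
  then have "\<forall>a. \<exists>p. p \<in> ?P \<and> K44_min a = (\<lambda>(su, sv). K44_energy a su sv) p"
    unfolding image_iff Bex_def by (rule allI)
  from choice[OF this] obtain p
    where "\<forall>a. p a \<in> ?P \<and> K44_min a = (\<lambda>(su, sv). K44_energy a su sv) (p a)"
    by blast
  then have p: "\<And>a. p a \<in> ?P" "\<And>a. K44_min a = (\<lambda>(su, sv). K44_energy a su sv) (p a)"
    by simp_all
  show ?thesis
  proof (rule that)
    show "(fst \<circ> p) a \<in> {1..4} \<rightarrow>\<^sub>E {-1, 1}" "(snd \<circ> p) a \<in> {1..4} \<rightarrow>\<^sub>E {-1, 1}" for a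
      using p(1)[of a] by (simp_all only: comp_apply mem_Times_iff)
    show "K44_energy a ((fst \<circ> p) a) ((snd \<circ> p) a) = K44_min a" for a
      using p(2)[of a] by (simp add: case_prod_beta)
  qed
qed

lemma sum_chimera_V:
  "(\<Sum>u\<in>chimera_V r. f u) = (\<Sum>i=1..r. \<Sum>j=1..r. \<Sum>k=1..4. \<Sum>l=0..1. f (i, j, k, l))"
proof -
  have "chimera_V r = {1..r} \<times> {1..r} \<times> {1..4} \<times> {0..1}"
    unfolding chimera_V_def by auto
  then show ?thesis
    unfolding sum.cartesian_product by (simp add: case_prod_beta)
qed

lemma sum_chimera_E01:
  "(\<Sum>e\<in>chimera_E01 r. f e) =
     (\<Sum>i=1..r. \<Sum>j=1..r. \<Sum>k0=1..4. \<Sum>k1=1..4. f ((i, j, k0, 0), (i, j, k1, 1)))"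
proof -
  define g :: "nat \<times> nat \<times> nat \<times> nat \<Rightarrow> vtx \<times> vtx"
    where "g = (\<lambda>(i, j, k0, k1). ((i, j, k0, 0), (i, j, k1, 1)))"
  have "inj g"
    unfolding g_def by (auto simp: inj_on_def)
  moreover have "chimera_E01 r = g ` ({1..r} \<times> {1..r} \<times> {1..4} \<times> {1..4})"
    unfolding chimera_E01_def g_def by (auto simp: image_iff)
  ultimately have "(\<Sum>e\<in>chimera_E01 r. f e) = (\<Sum>x\<in>{1..r} \<times> {1..r} \<times> {1..4} \<times> {1..4}. f (g x))"
    by (intro sum.reindex_cong[OF inj_on_subset]) auto
  then show ?thesis
    unfolding sum.cartesian_product by (simp add: g_def case_prod_beta)
qed

lemma finite_chimera_V: "finite (chimera_V r)"
  unfolding chimera_V_def by (rule finite_subset[of _ "{..r} \<times> {..r} \<times> {..4} \<times> {..1}"]) auto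

lemma chimera_E_endpoints:
  "e \<in> chimera_E r \<Longrightarrow> fst e \<in> chimera_V r \<and> snd e \<in> chimera_V r"
  unfolding chimera_E_def chimera_E0_def chimera_E1_def chimera_E01_def chimera_V_def by auto

lemma sum_chimera_E_split:
  "(\<Sum>e\<in>chimera_E r. f e) =
     (\<Sum>e\<in>chimera_E0 r. f e) + (\<Sum>e\<in>chimera_E1 r. f e) + (\<Sum>e\<in>chimera_E01 r. f e)"
proof -
  have "chimera_E r \<subseteq> chimera_V r \<times> chimera_V r"
    by (simp add: subset_iff mem_Times_iff chimera_E_endpoints)
  then have "finite (chimera_E r)"
    by (rule finite_subset) (simp add: finite_chimera_V)
  then have "finite (chimera_E0 r)" "finite (chimera_E1 r)" "finite (chimera_E01 r)"
    unfolding chimera_E_def by simp_all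
  moreover have "chimera_E0 r \<inter> chimera_E1 r = {}" "(chimera_E0 r \<union> chimera_E1 r) \<inter> chimera_E01 r = {}"
    unfolding chimera_E0_def chimera_E1_def chimera_E01_def by auto
  ultimately show ?thesis
    unfolding chimera_E_def by (simp add: sum.union_disjoint)
qed

lemma spin_product_le_abs:
  fixes a x y :: real
  assumes "x \<in> {-1, 1}" "y \<in> {-1, 1}"
  shows "a * x * y \<le> \<bar>a\<bar>"
  using assms by auto

lemma ground_energy_le_ising_energy:
  assumes "\<And>u. u \<in> chimera_V r \<Longrightarrow> S u \<in> {-1, 1}"
  shows "ground_energy r c d \<le> ising_energy r c d S"
proof -
  let ?S = "restrict S (chimera_V r)"
  have "ising_energy r c d ?S = ising_energy r c d S"
    unfolding ising_energy_def using chimera_E_endpoints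
    by (intro arg_cong2[where f = "(+)"] sum.cong) auto
  moreover have "ground_energy r c d \<le> ising_energy r c d ?S"
    unfolding ground_energy_def using assms finite_chimera_V by (intro Min_le finite_imageI finite_PiE) auto
  ultimately show ?thesis
    by simp
qed

lemma ising_energy_le:
  assumes "\<And>u. u \<in> chimera_V r \<Longrightarrow> S u \<in> {-1, 1}"
  shows "ising_energy r c d S \<le>
           (\<Sum>e\<in>chimera_E0 r. \<bar>c (fst e) (snd e)\<bar>) + (\<Sum>e\<in>chimera_E1 r. \<bar>c (fst e) (snd e)\<bar>)
         + (\<Sum>e\<in>chimera_E01 r. c (fst e) (snd e) * S (fst e) * S (snd e))
         + (\<Sum>u\<in>chimera_V r. d u * S u)"
proof -
  have edge: "c (fst e) (snd e) * S (fst e) * S (snd e) \<le> \<bar>c (fst e) (snd e)\<bar>"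
    if "e \<in> chimera_E r" for e
    using chimera_E_endpoints[OF that] by (intro spin_product_le_abs assms) auto
  have "(\<Sum>e\<in>chimera_E0 r. c (fst e) (snd e) * S (fst e) * S (snd e))
          \<le> (\<Sum>e\<in>chimera_E0 r. \<bar>c (fst e) (snd e)\<bar>)"
    by (intro sum_mono edge) (simp add: chimera_E_def)
  moreover have "(\<Sum>e\<in>chimera_E1 r. c (fst e) (snd e) * S (fst e) * S (snd e))
          \<le> (\<Sum>e\<in>chimera_E1 r. \<bar>c (fst e) (snd e)\<bar>)"
    by (intro sum_mono edge) (simp add: chimera_E_def)
  ultimately show ?thesis
    unfolding ising_energy_def sum_chimera_E_split by linarith
qed

definition cell_coupling :: "(vtx \<Rightarrow> vtx \<Rightarrow> real) \<Rightarrow> nat \<Rightarrow> nat \<Rightarrow> nat \<Rightarrow> nat \<Rightarrow> real" where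
  "cell_coupling c i j k0 k1 = c (i, j, k0, 0) (i, j, k1, 1)"

definition cell_spins ::
  "(nat \<Rightarrow> nat \<Rightarrow> real) \<Rightarrow> (nat \<Rightarrow> nat \<Rightarrow> nat \<Rightarrow> real) \<Rightarrow> (nat \<Rightarrow> nat \<Rightarrow> nat \<Rightarrow> real) \<Rightarrow> vtx \<Rightarrow> real"
  where "cell_spins \<epsilon> su sv = (\<lambda>(i, j, k, l). \<epsilon> i j * (if l = 0 then su i j k else sv i j k))"

definition cell_field ::
  "(vtx \<Rightarrow> real) \<Rightarrow> (nat \<Rightarrow> nat \<Rightarrow> nat \<Rightarrow> real) \<Rightarrow> (nat \<Rightarrow> nat \<Rightarrow> nat \<Rightarrow> real) \<Rightarrow> nat \<Rightarrow> nat \<Rightarrow> real"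
  where "cell_field d su sv i j =
           (\<Sum>k=1..4. \<Sum>l=0..1. d (i, j, k, l) * (if l = 0 then su i j k else sv i j k))"

lemma cell_spins_in_spins:
  assumes "\<And>i j. \<epsilon> i j \<in> {-1, 1}"
    and "\<And>i j. su i j \<in> {1..4} \<rightarrow>\<^sub>E {-1, 1}" "\<And>i j. sv i j \<in> {1..4} \<rightarrow>\<^sub>E {-1, 1}"
    and "u \<in> chimera_V r"
  shows "cell_spins \<epsilon> su sv u \<in> {-1, 1}"
proof -
  obtain i j k l where u: "u = (i, j, k, l)" and k: "k \<in> {1..4}"
    using assms(4) unfolding chimera_V_def by auto
  have "su i j k \<in> {-1, 1}" "sv i j k \<in> {-1, 1}"
    using PiE_mem[OF assms(2) k] PiE_mem[OF assms(3) k] .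
  then show ?thesis
    using assms(1)[of i j] unfolding u cell_spins_def by auto
qed

lemma sum_chimera_E01_cell_spins:
  assumes "\<And>i j. \<epsilon> i j \<in> {-1, 1}"
  shows "(\<Sum>e\<in>chimera_E01 r. c (fst e) (snd e) * cell_spins \<epsilon> su sv (fst e) * cell_spins \<epsilon> su sv (snd e))
       = (\<Sum>i=1..r. \<Sum>j=1..r. K44_energy (cell_coupling c i j) (su i j) (sv i j))"
proof -
  have flip: "a * (\<epsilon> i j * x) * (\<epsilon> i j * y) = a * x * y" for i j and a x y :: real
    using assms[of i j] by auto
  show ?thesis
    unfolding sum_chimera_E01 K44_energy_def cell_coupling_def cell_spins_def
    by (simp add: flip)
qed

lemma sum_chimera_V_cell_spins:
  "(\<Sum>u\<in>chimera_V r. d u * cell_spins \<epsilon> su sv u) = (\<Sum>i=1..r. \<Sum>j=1..r. \<epsilon> i j * cell_field d su sv i j)"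
  unfolding sum_chimera_V cell_spins_def cell_field_def by (simp add: sum_distrib_left algebra_simps)

lemma ground_energy_le_cell_spins:
  assumes K44: "\<And>a. K44_min a \<le> - C * (\<Sum>i\<in>{1..4}. \<Sum>j\<in>{1..4}. \<bar>a i j\<bar>)"
    and \<epsilon>: "\<And>i j. \<epsilon> i j \<in> {-1, 1}"
    and spins: "\<And>i j. su i j \<in> {1..4} \<rightarrow>\<^sub>E {-1, 1}" "\<And>i j. sv i j \<in> {1..4} \<rightarrow>\<^sub>E {-1, 1}"
    and optimal: "\<And>i j. K44_energy (cell_coupling c i j) (su i j) (sv i j) = K44_min (cell_coupling c i j)"
    and field: "\<And>i j. \<epsilon> i j * cell_field d su sv i j \<le> 0"
  shows "ground_energy r c d \<le>
           (\<Sum>e\<in>chimera_E0 r. \<bar>c (fst e) (snd e)\<bar>) + (\<Sum>e\<in>chimera_E1 r. \<bar>c (fst e) (snd e)\<bar>)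
         - C * (\<Sum>e\<in>chimera_E01 r. \<bar>c (fst e) (snd e)\<bar>)"
proof -
  define S where "S = cell_spins \<epsilon> su sv"
  have S: "S u \<in> {-1, 1}" if "u \<in> chimera_V r" for u
    unfolding S_def using cell_spins_in_spins[OF \<epsilon> spins that] .
  have "(\<Sum>e\<in>chimera_E01 r. c (fst e) (snd e) * S (fst e) * S (snd e))
          \<le> (\<Sum>i=1..r. \<Sum>j=1..r. - C * (\<Sum>k0=1..4. \<Sum>k1=1..4. \<bar>cell_coupling c i j k0 k1\<bar>))"
    unfolding S_def sum_chimera_E01_cell_spins[where \<epsilon> = \<epsilon>, OF \<epsilon>] optimal by (intro sum_mono K44)
  also have "\<dots> = - C * (\<Sum>e\<in>chimera_E01 r. \<bar>c (fst e) (snd e)\<bar>)"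
    unfolding sum_chimera_E01 cell_coupling_def by (simp add: sum_distrib_left)
  finally have intra: "(\<Sum>e\<in>chimera_E01 r. c (fst e) (snd e) * S (fst e) * S (snd e))
          \<le> - C * (\<Sum>e\<in>chimera_E01 r. \<bar>c (fst e) (snd e)\<bar>)" .
  have "(\<Sum>u\<in>chimera_V r. d u * S u) \<le> 0"
    unfolding S_def sum_chimera_V_cell_spins by (intro sum_nonpos field)
  moreover have "ground_energy r c d \<le> ising_energy r c d S"
    by (rule ground_energy_le_ising_energy) (rule S)
  moreover have "ising_energy r c d S \<le>
           (\<Sum>e\<in>chimera_E0 r. \<bar>c (fst e) (snd e)\<bar>) + (\<Sum>e\<in>chimera_E1 r. \<bar>c (fst e) (snd e)\<bar>)
         + (\<Sum>e\<in>chimera_E01 r. c (fst e) (snd e) * S (fst e) * S (snd e))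
         + (\<Sum>u\<in>chimera_V r. d u * S u)"
    by (rule ising_energy_le) (rule S)
  ultimately show ?thesis
    using intra by linarith
qed

theorem lemma3:
  fixes C :: real and r :: nat
    and c :: "vtx \<Rightarrow> vtx \<Rightarrow> real" and d :: "vtx \<Rightarrow> real"
  assumes C_pos: "C > 0"
    and C_K44: "\<And>a :: nat \<Rightarrow> nat \<Rightarrow> real.
                  K44_min a \<le> - C * (\<Sum>i\<in>{1..4}. \<Sum>j\<in>{1..4}. \<bar>a i j\<bar>)"
    and r_pos: "r \<ge> 1"
  shows "ground_energy r c d \<le>
           (\<Sum>e\<in>chimera_E0 r. \<bar>c (fst e) (snd e)\<bar>)
         + (\<Sum>e\<in>chimera_E1 r. \<bar>c (fst e) (snd e)\<bar>)
         - C * (\<Sum>e\<in>chimera_E01 r. \<bar>c (fst e) (snd e)\<bar>)"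
proof -
  obtain opt_u opt_v where opt: "\<And>a. opt_u a \<in> {1..4} \<rightarrow>\<^sub>E {-1, 1}" "\<And>a. opt_v a \<in> {1..4} \<rightarrow>\<^sub>E {-1, 1}"
    "\<And>a. K44_energy a (opt_u a) (opt_v a) = K44_min a"
    using K44_minimizers by blast
  define su where "su i j = opt_u (cell_coupling c i j)" for i j
  define sv where "sv i j = opt_v (cell_coupling c i j)" for i j
  define \<epsilon> :: "nat \<Rightarrow> nat \<Rightarrow> real" where "\<epsilon> i j = (if cell_field d su sv i j \<le> 0 then 1 else -1)" for i j
  show ?thesis
  proof (rule ground_energy_le_cell_spins[OF C_K44])
    show "\<epsilon> i j \<in> {-1, 1}" "\<epsilon> i j * cell_field d su sv i j \<le> 0" for i j
      unfolding \<epsilon>_def by auto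
    show "su i j \<in> {1..4} \<rightarrow>\<^sub>E {-1, 1}" "sv i j \<in> {1..4} \<rightarrow>\<^sub>E {-1, 1}"
      "K44_energy (cell_coupling c i j) (su i j) (sv i j) = K44_min (cell_coupling c i j)" for i j
      unfolding su_def sv_def by (rule opt)+
  qed
qed

end
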